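(* Let $k\geq 2$ be an integer, let $\mathcal{F}$ be a linear $k$-uniform family with maximum degree $\Delta=\Delta(\mathcal{F})$ and maximum matching size $\nu=\nu(\mathcal{F})$, and let $\mathcal{M}$ be a maximum matching of $\mathcal{F}$. Then $|D_1(\mathcal{F},\mathcal{M})|\leq\max\{(\Delta-1)\nu,\;k(k-1)\nu\}$.
   Context: A family is a finite collection of distinct subsets of a vertex set; it is $k$-uniform if every member has exactly $k$ elements and linear if any two distinct members share at most one vertex. A matching is a collection of pairwise disjoint members; $\nu(\mathcal{F})$ is the maximum size of a matching, and a maximum matching is one of that size. $\Delta(\mathcal{F})=\max_x|\{A\in\mathcal{F}:x\in A\}|$. $X_{\mathcal{M}}=\bigcup_{A\in\mathcal{M}}A$ and $D_1(\mathcal{F},\mathcal{M})=\{A\in\mathcal{F}:|A\cap X_{\mathcal{M}}|=1\}$. *)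

theory Defs
  imports Main
begin

definition uniform :: "nat \<Rightarrow> 'a set set \<Rightarrow> bool" where
  "uniform k F \<longleftrightarrow> (\<forall>A\<in>F. finite A \<and> card A = k)"

definition linear_family :: "'a set set \<Rightarrow> bool" where
  "linear_family F \<longleftrightarrow> (\<forall>A\<in>F. \<forall>B\<in>F. A \<noteq> B \<longrightarrow> card (A \<inter> B) \<le> 1)"

definition matching :: "'a set set \<Rightarrow> 'a set set \<Rightarrow> bool" where
  "matching F M \<longleftrightarrow> M \<subseteq> F \<and> (\<forall>A\<in>M. \<forall>B\<in>M. A \<noteq> B \<longrightarrow> A \<inter> B = {})"

definition nu :: "'a set set \<Rightarrow> nat" where
  "nu F = Max (card ` {M. matching F M})"

definition max_matching :: "'a set set \<Rightarrow> 'a set set \<Rightarrow> bool" where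
  "max_matching F M \<longleftrightarrow> matching F M \<and> card M = nu F"

definition degree :: "'a set set \<Rightarrow> 'a \<Rightarrow> nat" where
  "degree F x = card {A\<in>F. x \<in> A}"

definition max_degree :: "'a set set \<Rightarrow> nat" where
  "max_degree F = Max (insert 0 (degree F ` (\<Union>F)))"

definition D1 :: "'a set set \<Rightarrow> 'a set set \<Rightarrow> 'a set set" where
  "D1 F M = {A\<in>F. card (A \<inter> \<Union>M) = 1}"

end

theory Submission
  imports Defs
begin

text \<open>
  Sort the members of \<open>D\<^sub>1(F, M)\<close> by the vertex \<open>z \<in> X\<^sub>M\<close> at which they meet the matching.
  Take \<open>B \<in> M\<close>. If only one vertex \<open>z\<close> of \<open>B\<close> carries such members, they all contain \<open>z\<close> and
  differ from \<open>B\<close>, so there are at most \<open>\<Delta> - 1\<close> of them. Otherwise two members attached at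
  distinct vertices \<open>z, w\<close> of \<open>B\<close> must intersect, since replacing \<open>B\<close> by them would give a larger
  matching; so every member attached at \<open>z\<close> meets a fixed member \<open>A'\<close> attached at \<open>w\<close> in a
  point of \<open>A' - {w}\<close>, and by linearity different such members use different points. This gives
  at most \<open>k - 1\<close> members per vertex of \<open>B\<close>, hence \<open>k(k - 1)\<close> per block.
\<close>

definition D1_at :: "'a set set \<Rightarrow> 'a set set \<Rightarrow> 'a \<Rightarrow> 'a set set" where
  "D1_at F M z = {A\<in>F. A \<inter> \<Union>M = {z}}"

lemma finite_D1_at: "finite F \<Longrightarrow> finite (D1_at F M z)"
  by (simp add: D1_at_def)

lemma D1_subset_UN_D1_at: "D1 F M \<subseteq> (\<Union>B\<in>M. \<Union>z\<in>B. D1_at F M z)"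
proof
  fix A assume "A \<in> D1 F M"
  then have "A \<in> F" and "card (A \<inter> \<Union>M) = 1" by (auto simp: D1_def)
  then obtain z where z: "A \<inter> \<Union>M = {z}" by (meson card_1_singletonE)
  then obtain B where "B \<in> M" "z \<in> B" by blast
  with \<open>A \<in> F\<close> z show "A \<in> (\<Union>B\<in>M. \<Union>z\<in>B. D1_at F M z)" by (auto simp: D1_at_def)
qed

lemma card_matching_le_nu:
  assumes "finite F" "matching F M"
  shows "card M \<le> nu F"
proof -
  have "{M. matching F M} \<subseteq> Pow F" by (auto simp: matching_def)
  then have "finite {M. matching F M}" using assms(1) by (meson finite_Pow_iff finite_subset)
  then show ?thesis unfolding nu_def using assms(2) by (intro Max_ge) auto
qed

lemma finite_Union_uniform: "finite F \<Longrightarrow> uniform k F \<Longrightarrow> finite (\<Union>F)"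
  by (auto simp: uniform_def)

lemma degree_le_max_degree:
  assumes "finite (\<Union>F)" "x \<in> \<Union>F"
  shows "degree F x \<le> max_degree F"
  unfolding max_degree_def using assms by (intro Max_ge) auto

lemma matching_replace:
  assumes "matching F M" "B \<in> M" "A \<in> F" "A' \<in> F" "A \<inter> A' = {}"
    and "\<And>C. C \<in> M - {B} \<Longrightarrow> A \<inter> C = {} \<and> A' \<inter> C = {}"
  shows "matching F (insert A (insert A' (M - {B})))"
  using assms unfolding matching_def by (simp add: Int_commute) blast

lemma max_matching_D1_at_intersect:
  assumes "finite F" "max_matching F M"
    and "B \<in> M" "z \<in> B" "w \<in> B" "z \<noteq> w"
    and A: "A \<in> D1_at F M z" and A': "A' \<in> D1_at F M w"
  shows "A \<inter> A' \<noteq> {}"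
proof
  assume disjoint: "A \<inter> A' = {}"
  have "matching F M" and card_M: "card M = nu F"
    using assms(2) by (auto simp: max_matching_def)
  then have disjoint_M: "\<And>C D. C \<in> M \<Longrightarrow> D \<in> M \<Longrightarrow> C \<noteq> D \<Longrightarrow> C \<inter> D = {}"
    and "M \<subseteq> F" by (auto simp: matching_def)
  have finite_M: "finite M" using \<open>M \<subseteq> F\<close> assms(1) finite_subset by blast
  have A_meet: "A \<inter> \<Union>M = {z}" and A'_meet: "A' \<inter> \<Union>M = {w}" and "A \<in> F" "A' \<in> F"
    using A A' by (auto simp: D1_at_def)
  text \<open>Outside \<open>B\<close> the matching avoids \<open>z\<close> and \<open>w\<close>, hence \<open>A\<close> and \<open>A'\<close> entirely.\<close>
  have avoid: "A \<inter> C = {} \<and> A' \<inter> C = {}" if "C \<in> M - {B}" for C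
  proof -
    have "z \<notin> C" "w \<notin> C" using disjoint_M[of C B] that assms(3-5) by blast+
    moreover have "C \<subseteq> \<Union>M" using that by blast
    then have "A \<inter> C \<subseteq> {z}" "A' \<inter> C \<subseteq> {w}"
      unfolding A_meet[symmetric] A'_meet[symmetric] by blast+
    ultimately show ?thesis by blast
  qed
  text \<open>A member of \<open>M\<close> attached at a vertex of \<open>B\<close> would be \<open>B\<close> itself, so \<open>B\<close> would be a singleton.\<close>
  have not_in_M: False if "X \<in> M" "X \<inter> \<Union>M = {x}" "x \<in> B" for X x
  proof -
    have "X = {x}" using that(1,2) by blast
    then have "X = B" using disjoint_M[OF that(1) assms(3)] that(3) by blast
    then show False using \<open>X = {x}\<close> assms(4-6) by blast
  qed
  have "A \<notin> M" using not_in_M A_meet assms(4) by blast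
  have "A' \<notin> M" using not_in_M A'_meet assms(5) by blast
  have "A \<noteq> A'" using disjoint A_meet by blast
  define M' where "M' = insert A (insert A' (M - {B}))"
  have "matching F M'"
    unfolding M'_def by (rule matching_replace[OF \<open>matching F M\<close> assms(3) \<open>A \<in> F\<close> \<open>A' \<in> F\<close> disjoint avoid])
  then have "card M' \<le> card M"
    using card_matching_le_nu[OF assms(1)] card_M by simp
  moreover have "card M' = card M + 1"
    unfolding M'_def using finite_M \<open>A \<notin> M\<close> \<open>A' \<notin> M\<close> \<open>A \<noteq> A'\<close>
    by (simp add: card.remove[OF finite_M assms(3)])
  ultimately show False by simp
qed

lemma card_D1_at_le_degree:
  assumes "finite F" "uniform k F" "k \<ge> 2" "matching F M" "B \<in> M" "z \<in> B"
  shows "card (D1_at F M z) \<le> degree F z - 1"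
proof -
  have "B \<in> F" using assms(4,5) by (auto simp: matching_def)
  then have "card B = k" using assms(2) by (auto simp: uniform_def)
  moreover have "B \<inter> \<Union>M = B" using assms(5) by auto
  ultimately have "B \<notin> D1_at F M z" using assms(3) by (auto simp: D1_at_def)
  moreover have "card (insert B (D1_at F M z)) \<le> card {A\<in>F. z \<in> A}"
    using \<open>B \<in> F\<close> assms(1,6) by (intro card_mono) (auto simp: D1_at_def)
  ultimately have "card (D1_at F M z) + 1 \<le> card {A\<in>F. z \<in> A}"
    using finite_D1_at[OF assms(1)] by simp
  then show ?thesis unfolding degree_def by simp
qed

lemma card_D1_at_le_pred_uniform:
  assumes "finite F" "uniform k F" "linear_family F" "max_matching F M"
    and "B \<in> M" "z \<in> B" "w \<in> B" "z \<noteq> w" "A' \<in> D1_at F M w"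
  shows "card (D1_at F M z) \<le> k - 1"
proof -
  have "A' \<in> F" and A'_meet: "A' \<inter> \<Union>M = {w}" using assms(9) by (auto simp: D1_at_def)
  then have "finite A'" "card A' = k" "w \<in> A'" using assms(2) by (auto simp: uniform_def)
  have "z \<in> \<Union>M" "w \<in> \<Union>M" using assms(5-7) by blast+
  define pick where "pick A = (SOME t. t \<in> A \<inter> A')" for A
  have pick: "pick A \<in> A \<inter> A'" if "A \<in> D1_at F M z" for A
    using max_matching_D1_at_intersect[OF assms(1,4-8) that assms(9)]
    unfolding pick_def by (meson ex_in_conv someI_ex)
  have pick_outside: "pick A \<notin> \<Union>M" if "A \<in> D1_at F M z" for A
  proof
    assume "pick A \<in> \<Union>M"
    moreover have "A \<inter> \<Union>M = {z}" using that by (simp add: D1_at_def)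
    ultimately have "pick A = z" "pick A = w" using pick[OF that] A'_meet by blast+
    with assms(8) show False by simp
  qed
  text \<open>Two members attached at \<open>z\<close> sharing a second point coincide by linearity.\<close>
  have "inj_on pick (D1_at F M z)"
  proof
    fix A1 A2 assume A1: "A1 \<in> D1_at F M z" and A2: "A2 \<in> D1_at F M z"
      and same: "pick A1 = pick A2"
    have "A1 \<in> F" "A2 \<in> F" "z \<in> A1" "z \<in> A2" using A1 A2 by (auto simp: D1_at_def)
    then have "finite (A1 \<inter> A2)" using assms(2) by (simp add: uniform_def)
    moreover have "{z, pick A1} \<subseteq> A1 \<inter> A2"
      using pick[OF A1] pick[OF A2] same \<open>z \<in> A1\<close> \<open>z \<in> A2\<close> by auto
    ultimately have "card {z, pick A1} \<le> card (A1 \<inter> A2)" by (rule card_mono)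
    moreover have "z \<noteq> pick A1" using pick_outside[OF A1] \<open>z \<in> \<Union>M\<close> by blast
    ultimately have "2 \<le> card (A1 \<inter> A2)" by simp
    show "A1 = A2"
    proof (rule ccontr)
      assume "A1 \<noteq> A2"
      with assms(3) \<open>A1 \<in> F\<close> \<open>A2 \<in> F\<close> have "card (A1 \<inter> A2) \<le> 1"
        by (simp add: linear_family_def)
      with \<open>2 \<le> card (A1 \<inter> A2)\<close> show False by simp
    qed
  qed
  then have "card (D1_at F M z) \<le> card (A' - {w})"
    using pick pick_outside \<open>w \<in> \<Union>M\<close> \<open>finite A'\<close> by (intro card_inj_on_le) auto
  then show ?thesis using \<open>card A' = k\<close> \<open>w \<in> A'\<close> by simp
qed

lemma card_D1_block_le:
  assumes "finite F" "uniform k F" "k \<ge> 2" "linear_family F" "max_matching F M" "B \<in> M"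
  shows "card (\<Union>z\<in>B. D1_at F M z) \<le> max (max_degree F - 1) (k * (k - 1))"
proof -
  have "matching F M" using assms(5) by (simp add: max_matching_def)
  then have "B \<in> F" using assms(6) by (auto simp: matching_def)
  then have "finite B" "card B = k" using assms(2) by (auto simp: uniform_def)
  show ?thesis
  proof (cases "\<exists>z\<in>B. \<forall>w\<in>B. w \<noteq> z \<longrightarrow> D1_at F M w = {}")
    case True
    then obtain z where "z \<in> B" and "\<forall>w\<in>B. w \<noteq> z \<longrightarrow> D1_at F M w = {}"
      by blast
    then have "(\<Union>z\<in>B. D1_at F M z) \<subseteq> D1_at F M z" by auto
    then have "card (\<Union>z\<in>B. D1_at F M z) \<le> card (D1_at F M z)"
      by (rule card_mono[OF finite_D1_at[OF assms(1)]])
    also have "\<dots> \<le> degree F z - 1"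
      by (rule card_D1_at_le_degree[OF assms(1-3) \<open>matching F M\<close> assms(6) \<open>z \<in> B\<close>])
    also have "\<dots> \<le> max_degree F - 1"
    proof -
      have "z \<in> \<Union>F" using \<open>B \<in> F\<close> \<open>z \<in> B\<close> by blast
      with finite_Union_uniform[OF assms(1,2)] have "degree F z \<le> max_degree F"
        by (rule degree_le_max_degree)
      then show ?thesis by (rule diff_le_mono)
    qed
    finally show ?thesis by simp
  next
    case False
    have per_vertex: "card (D1_at F M z) \<le> k - 1" if "z \<in> B" for z
    proof -
      obtain w where "w \<in> B" "z \<noteq> w" "D1_at F M w \<noteq> {}" using False \<open>z \<in> B\<close> by blast
      then obtain A' where "A' \<in> D1_at F M w" by blast
      then show ?thesis
        by (rule card_D1_at_le_pred_uniform[OF assms(1,2,4-6) \<open>z \<in> B\<close> \<open>w \<in> B\<close> \<open>z \<noteq> w\<close>])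
    qed
    have "card (\<Union>z\<in>B. D1_at F M z) \<le> (\<Sum>z\<in>B. card (D1_at F M z))"
      by (rule card_UN_le[OF \<open>finite B\<close>])
    also have "\<dots> \<le> (\<Sum>z\<in>B. k - 1)"
      using per_vertex by (rule sum_mono)
    finally show ?thesis using \<open>card B = k\<close> by simp
  qed
qed

theorem lemma3:
  fixes F M :: "'a set set" and k :: nat
  assumes "k \<ge> 2"
    and "finite F"
    and "uniform k F"
    and "linear_family F"
    and "max_matching F M"
  shows "card (D1 F M) \<le> max ((max_degree F - 1) * nu F) (k * (k - 1) * nu F)"
proof -
  let ?c = "max (max_degree F - 1) (k * (k - 1))"
  have "M \<subseteq> F" and card_M: "card M = nu F"
    using assms(5) by (auto simp: max_matching_def matching_def)
  then have "finite M" "\<forall>B\<in>M. finite B"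
    using assms(2,3) finite_subset by (auto simp: uniform_def)
  then have "card (D1 F M) \<le> card (\<Union>B\<in>M. \<Union>z\<in>B. D1_at F M z)"
    using D1_subset_UN_D1_at assms(2) by (intro card_mono) (simp_all add: finite_D1_at)
  also have "\<dots> \<le> (\<Sum>B\<in>M. card (\<Union>z\<in>B. D1_at F M z))"
    by (rule card_UN_le[OF \<open>finite M\<close>])
  also have "\<dots> \<le> (\<Sum>B\<in>M. ?c)"
    using card_D1_block_le[OF assms(2,3,1,4,5)] by (rule sum_mono)
  also have "\<dots> = ?c * nu F" using card_M by simp
  also have "\<dots> = max ((max_degree F - 1) * nu F) (k * (k - 1) * nu F)"
    by (rule nat_mult_max_left)
  finally show ?thesis .
qed

end
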